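(* There is no non-trivial subfunctor $F$ of the identity functor on the category of abelian groups such that $F(A)$ is torsion-free for every abelian group $A$.
   Context: A subfunctor $F$ of the identity functor on abelian groups assigns to each abelian group $A$ a subgroup $F(A)\subseteq A$ with $f(F(A))\subseteq F(A')$ for every homomorphism $f:A\to A'$; it is non-trivial if $F(A)\neq 0$ for some $A$. *)

theory Defs
  imports "HOL-Algebra.Algebra"
begin

definition subfunctor_id :: "('a monoid \<Rightarrow> 'a set) \<Rightarrow> bool" where
  "subfunctor_id F \<longleftrightarrow>
     (\<forall>G. comm_group G \<longrightarrow> subgroup (F G) G) \<and>
     (\<forall>G H h. comm_group G \<longrightarrow> comm_group H \<longrightarrow> h \<in> hom G H \<longrightarrow> h ` (F G) \<subseteq> F H)"

definition nontrivial_subfunctor :: "('a monoid \<Rightarrow> 'a set) \<Rightarrow> bool" where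
  "nontrivial_subfunctor F \<longleftrightarrow> (\<exists>G. comm_group G \<and> F G \<noteq> {\<one>\<^bsub>G\<^esub>})"

definition torsion_free_in :: "'a monoid \<Rightarrow> 'a set \<Rightarrow> bool" where
  "torsion_free_in G S \<longleftrightarrow>
     (\<forall>x\<in>S. \<forall>n::nat. n > 0 \<longrightarrow> x [^]\<^bsub>G\<^esub> n = \<one>\<^bsub>G\<^esub> \<longrightarrow> x = \<one>\<^bsub>G\<^esub>)"

end

theory Submission
  imports Defs
begin

text \<open>Suppose x \<noteq> 1 lies in F G and let H be the subgroup generated by x^2. The image of x
  in G/H lies in F(G/H) and has order at most 2, so torsion-freeness of F(G/H) forces x \<in> H,
  i.e. x = x^(2k) for some integer k. Then x^(2k - 1) = 1 with 2k - 1 \<noteq> 0, so x is a torsion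
  element of F G, a contradiction.\<close>

text \<open>Since F only sees groups whose carrier lives in the type of G, the quotient G/H is
  realised on that type by choosing a representative of each coset.\<close>
lemma (in comm_group) quotient_hom_same_type:
  assumes H: "subgroup H G"
  obtains Q :: "'a monoid" and q where "comm_group Q" "q \<in> hom G Q" "kernel G Q q = H"
proof -
  define q where "q a = (SOME y. y \<in> H #> a)" for a
  define Q where "Q = \<lparr>carrier = q ` carrier G, monoid.mult = \<lambda>a b. q (a \<otimes> b), one = q \<one>\<rparr>"
  have N: "normal H G" using H normal_iff_subgroup by blast
  have q_in_coset: "q a \<in> H #> a" if "a \<in> carrier G" for a
    unfolding q_def by (rule someI[of _ a]) (rule rcos_self[OF that H])
  have q_closed: "q a \<in> carrier G" if "a \<in> carrier G" for a
    using q_in_coset[OF that] r_coset_subset_G[OF subgroup.subset[OF H] that] by blast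
  have coset_q: "H #> q a = H #> a" if "a \<in> carrier G" for a
    using repr_independence[OF q_in_coset[OF that] that H] by simp
  have q_mult: "q (a \<otimes> b) = q (q a \<otimes> q b)" if "a \<in> carrier G" "b \<in> carrier G" for a b
  proof -
    have "H #> (q a \<otimes> q b) = (H #> q a) <#> (H #> q b)"
      using normal.rcos_sum[OF N] q_closed that by simp
    also have "\<dots> = H #> (a \<otimes> b)" using coset_q that normal.rcos_sum[OF N] by simp
    finally show ?thesis unfolding q_def by simp
  qed
  have hom: "q \<in> hom G Q"
    unfolding hom_def Q_def using q_mult by auto
  have "comm_group (Q\<lparr>carrier := q ` carrier G, one := q \<one>\<rparr>)"
    by (rule hom_imp_img_comm_group[OF hom])
  moreover have "Q\<lparr>carrier := q ` carrier G, one := q \<one>\<rparr> = Q" unfolding Q_def by simp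
  ultimately have "comm_group Q" by simp
  moreover have "q a = \<one>\<^bsub>Q\<^esub> \<longleftrightarrow> a \<in> H" if "a \<in> carrier G" for a
  proof -
    have "q a = q \<one> \<longleftrightarrow> H #> a = H #> \<one>"
      using coset_q that by (metis q_def one_closed)
    also have "\<dots> \<longleftrightarrow> a \<in> H"
      using coset_join1[OF _ that H] coset_join2[OF that H] subgroup.subset[OF H] by auto
    finally show ?thesis unfolding Q_def by simp
  qed
  then have "kernel G Q q = H"
    unfolding kernel_def using subgroup.subset[OF H] by auto
  ultimately show thesis using that hom by blast
qed

lemma (in group) odd_ord_if_mem_generate_square:
  assumes x: "x \<in> carrier G" and "x \<in> generate G {x [^] (2::nat)}"
  shows "odd (ord x)"
proof -
  obtain k :: int where "x = (x [^] (2::nat)) [^] k"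
    using assms generate_pow[of "x [^] (2::nat)"] by auto
  also have "\<dots> = x [^] (2 * k)"
    using int_pow_pow[OF x, of 2 k] int_pow_int[of G x 2] by simp
  finally have "x [^] (1::int) = x [^] (2 * k)"
    using x by simp
  then have "int (ord x) dvd 2 * k - 1"
    using int_pow_eq[OF x] by blast
  moreover have "odd (2 * k - 1)"
    by simp
  ultimately show ?thesis
    using dvd_trans[of 2 "int (ord x)" "2 * k - 1"] by auto
qed

lemma subfunctor_torsion_free_mem_generate_square:
  fixes F :: "'a monoid \<Rightarrow> 'a set" and G :: "'a monoid" (structure)
  assumes F: "subfunctor_id F" and tf: "\<forall>G. comm_group G \<longrightarrow> torsion_free_in G (F G)"
    and G: "comm_group G" and x: "x \<in> F G"
  shows "x \<in> generate G {x [^] (2::nat)}"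
proof -
  interpret comm_group G by (rule G)
  have x_closed: "x \<in> carrier G"
    using F G x subgroup.subset unfolding subfunctor_id_def by blast
  define H where "H = generate G {x [^] (2::nat)}"
  have H: "subgroup H G"
    unfolding H_def using x_closed by (intro generate_is_subgroup) auto
  obtain Q :: "'a monoid" and q where Q: "comm_group Q" and q: "q \<in> hom G Q"
    and ker: "kernel G Q q = H"
    using quotient_hom_same_type[OF H] .
  interpret Q: comm_group Q by (rule Q)
  have "q x \<in> F Q" using F G Q q x unfolding subfunctor_id_def by blast
  moreover have "q x [^]\<^bsub>Q\<^esub> (2::nat) = \<one>\<^bsub>Q\<^esub>"
  proof -
    have "x [^] (2::nat) \<in> kernel G Q q"
      unfolding ker H_def by (rule generate.incl) simp
    then show ?thesis
      using hom_nat_pow[OF q x_closed is_group Q.is_group] unfolding kernel_def by simp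
  qed
  moreover have "torsion_free_in Q (F Q)"
    using tf Q by blast
  ultimately have "q x = \<one>\<^bsub>Q\<^esub>"
    unfolding torsion_free_in_def using pos2 by blast
  then show ?thesis
    using ker x_closed unfolding kernel_def H_def by blast
qed

lemma torsion_free_subfunctor_trivial:
  fixes F :: "'a monoid \<Rightarrow> 'a set" and G :: "'a monoid" (structure)
  assumes F: "subfunctor_id F" and tf: "\<forall>G. comm_group G \<longrightarrow> torsion_free_in G (F G)"
    and G: "comm_group G"
  shows "F G = {\<one>}"
proof -
  interpret comm_group G by (rule G)
  have sub: "subgroup (F G) G" using F G unfolding subfunctor_id_def by blast
  have "x = \<one>" if x: "x \<in> F G" for x
  proof (rule ccontr)
    assume "x \<noteq> \<one>"
    have x_closed: "x \<in> carrier G" using x sub subgroup.subset by blast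
    have "ord x = 0"
      using tf G x x_closed \<open>x \<noteq> \<one>\<close> ord_eq_0 unfolding torsion_free_in_def by blast
    moreover have "odd (ord x)"
      using odd_ord_if_mem_generate_square[OF x_closed]
        subfunctor_torsion_free_mem_generate_square[OF F tf G x] by blast
    ultimately show False by simp
  qed
  then show ?thesis using subgroup.one_closed[OF sub] by blast
qed

theorem corollary3p18:
  fixes F :: "'a monoid \<Rightarrow> 'a set"
  shows "\<not> (subfunctor_id F \<and> nontrivial_subfunctor F \<and>
            (\<forall>G. comm_group G \<longrightarrow> torsion_free_in G (F G)))"
  using torsion_free_subfunctor_trivial unfolding nontrivial_subfunctor_def by blast

end
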